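(* Let $\Theta$ be a causal theory over $\mathfrak L$ and $M\in\mathfrak M$. Then $M$ is causally explained by $\Theta$ if and only if, as a world of the Kripke model $K_\Theta$, $M\Vdash(\Box p\to p)\wedge(p\to\Box p)$ for every $p\in\mathcal L_\Box$.
   Context: $\mathfrak L$ is a classical propositional language with classical consequence $\vdash$; $\mathrm{Cn}(X)$ is the $\vdash$-closure of $X$; $\mathfrak M$ is the set of models (valuations) of $\mathfrak L$. A causal rule is $\phi\triangleright\psi$ with $\phi,\psi\in\mathfrak L$; a causal theory $\Theta$ is a set of causal rules. For $M\in\mathfrak M$, $M^{\Theta}=\mathrm{Cn}(\{\psi : \phi\triangleright\psi\in\Theta,\ M\Vdash\phi\})$, and $M$ is causally explained by $\Theta$ iff $M$ is the only model of $M^\Theta$. $R_\Theta$ on $\mathfrak M$: $M\,R_\Theta\,M'$ iff for every $\phi\triangleright\psi\in\Theta$, $M\Vdash\phi$ implies $M'\Vdash\psi$. $\mathcal L_\Box$ is generated by $\mathfrak L$ and a unary operator $\Box$. The Kripke model $K_\Theta$ has worlds $\mathfrak M$, accessibility $R_\Theta$, atoms forced as in the valuation, Boolean connectives classical, and $M\Vdash\Box p$ iff $M'\Vdash p$ for all $M'$ with $M\,R_\Theta\,M'$. *)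

theory Defs
  imports Main
begin

datatype 'a form =
    Atom 'a
  | Bot
  | Neg "'a form"
  | Conj "'a form" "'a form"
  | Disj "'a form" "'a form"
  | Impl "'a form" "'a form"

type_synonym 'a model = "'a \<Rightarrow> bool"

fun sat :: "'a model \<Rightarrow> 'a form \<Rightarrow> bool" where
  "sat M (Atom a) = M a"
| "sat M Bot = False"
| "sat M (Neg p) = (\<not> sat M p)"
| "sat M (Conj p q) = (sat M p \<and> sat M q)"
| "sat M (Disj p q) = (sat M p \<or> sat M q)"
| "sat M (Impl p q) = (sat M p \<longrightarrow> sat M q)"

text \<open>Classical consequence (semantic; coincides with derivability by completeness).\<close>
definition entails :: "'a form set \<Rightarrow> 'a form \<Rightarrow> bool" where
  "entails X \<phi> \<longleftrightarrow> (\<forall>M. (\<forall>\<chi>\<in>X. sat M \<chi>) \<longrightarrow> sat M \<phi>)"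

definition Cn :: "'a form set \<Rightarrow> 'a form set" where
  "Cn X = {\<phi>. entails X \<phi>}"

text \<open>A causal rule \<phi> \<triangleright> \<psi> is the pair (\<phi>, \<psi>); a causal theory is a set of rules.\<close>
type_synonym 'a causal_theory = "('a form \<times> 'a form) set"

definition reduct :: "'a causal_theory \<Rightarrow> 'a model \<Rightarrow> 'a form set" where
  "reduct \<Theta> M = Cn {\<psi>. \<exists>\<phi>. (\<phi>, \<psi>) \<in> \<Theta> \<and> sat M \<phi>}"

definition is_model_of :: "'a model \<Rightarrow> 'a form set \<Rightarrow> bool" where
  "is_model_of M X \<longleftrightarrow> (\<forall>\<chi>\<in>X. sat M \<chi>)"

definition causally_explained :: "'a causal_theory \<Rightarrow> 'a model \<Rightarrow> bool" where
  "causally_explained \<Theta> M \<longleftrightarrow> (\<forall>M'. is_model_of M' (reduct \<Theta> M) \<longleftrightarrow> M' = M)"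

definition RTheta :: "'a causal_theory \<Rightarrow> 'a model \<Rightarrow> 'a model \<Rightarrow> bool" where
  "RTheta \<Theta> M M' \<longleftrightarrow> (\<forall>\<phi> \<psi>. (\<phi>, \<psi>) \<in> \<Theta> \<longrightarrow> sat M \<phi> \<longrightarrow> sat M' \<psi>)"

datatype 'a mform =
    MAtom 'a
  | MBot
  | MNeg "'a mform"
  | MConj "'a mform" "'a mform"
  | MDisj "'a mform" "'a mform"
  | MImpl "'a mform" "'a mform"
  | Box "'a mform"

fun kforces :: "'a causal_theory \<Rightarrow> 'a model \<Rightarrow> 'a mform \<Rightarrow> bool" where
  "kforces \<Theta> M (MAtom a) = M a"
| "kforces \<Theta> M MBot = False"
| "kforces \<Theta> M (MNeg p) = (\<not> kforces \<Theta> M p)"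
| "kforces \<Theta> M (MConj p q) = (kforces \<Theta> M p \<and> kforces \<Theta> M q)"
| "kforces \<Theta> M (MDisj p q) = (kforces \<Theta> M p \<or> kforces \<Theta> M q)"
| "kforces \<Theta> M (MImpl p q) = (kforces \<Theta> M p \<longrightarrow> kforces \<Theta> M q)"
| "kforces \<Theta> M (Box p) = (\<forall>M'. RTheta \<Theta> M M' \<longrightarrow> kforces \<Theta> M' p)"

end

theory Submission
  imports Defs
begin

(* The models of the reduct M^Theta are exactly the R_Theta-successors of M, so
   M is causally explained iff M is its own unique successor.  At such a world
   Box p and p agree for every modal formula, which gives one direction.
   Conversely, the T-instances (Box p --> p) for embedded classical consequents
   of rules fired at M make M a successor of itself, and the 4-like instances
   (p --> Box p) for literals MAtom a and MNeg (MAtom a) force every successor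
   to agree with M on every atom, hence to equal M. *)

fun emb :: "'a form \<Rightarrow> 'a mform" where
  "emb (Atom a) = MAtom a"
| "emb Bot = MBot"
| "emb (Neg p) = MNeg (emb p)"
| "emb (Conj p q) = MConj (emb p) (emb q)"
| "emb (Disj p q) = MDisj (emb p) (emb q)"
| "emb (Impl p q) = MImpl (emb p) (emb q)"

lemma kforces_emb: "kforces \<Theta> M (emb \<phi>) \<longleftrightarrow> sat M \<phi>"
  by (induction \<phi>) auto

lemma model_of_reduct_iff_successor:
  "is_model_of M' (reduct \<Theta> M) \<longleftrightarrow> RTheta \<Theta> M M'"
  unfolding is_model_of_def reduct_def Cn_def entails_def RTheta_def
  by blast

lemma causally_explained_iff_sole_successor:
  "causally_explained \<Theta> M \<longleftrightarrow> (\<forall>M'. RTheta \<Theta> M M' \<longleftrightarrow> M' = M)"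
  unfolding causally_explained_def model_of_reduct_iff_successor ..

lemma box_iff_at_sole_successor:
  assumes "\<And>M'. RTheta \<Theta> M M' \<longleftrightarrow> M' = M"
  shows "kforces \<Theta> M (Box p) \<longleftrightarrow> kforces \<Theta> M p"
  using assms by simp

lemma reflexive_if_T:
  assumes T: "\<And>p. kforces \<Theta> M (MImpl (Box p) p)"
  shows "RTheta \<Theta> M M"
  unfolding RTheta_def
proof (intro allI impI)
  fix \<phi> \<psi> assume "(\<phi>, \<psi>) \<in> \<Theta>" and "sat M \<phi>"
  then have "kforces \<Theta> M (Box (emb \<psi>))"
    by (auto simp: kforces_emb RTheta_def)
  with T[of "emb \<psi>"] show "sat M \<psi>"
    by (simp add: kforces_emb)
qed

lemma successor_eq_if_literals_boxed:
  assumes pos: "\<And>a. kforces \<Theta> M (MImpl (MAtom a) (Box (MAtom a)))"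
    and neg: "\<And>a. kforces \<Theta> M (MImpl (MNeg (MAtom a)) (Box (MNeg (MAtom a))))"
    and succ: "RTheta \<Theta> M M'"
  shows "M' = M"
proof
  fix a
  show "M' a = M a"
    using pos[of a] neg[of a] succ by (cases "M a") auto
qed

theorem mainTheorem4:
  fixes \<Theta> :: "'a causal_theory" and M :: "'a model"
  shows "causally_explained \<Theta> M \<longleftrightarrow>
    (\<forall>p. kforces \<Theta> M (MConj (MImpl (Box p) p) (MImpl p (Box p))))"
proof
  assume "causally_explained \<Theta> M"
  then have "\<And>M'. RTheta \<Theta> M M' \<longleftrightarrow> M' = M"
    by (simp add: causally_explained_iff_sole_successor)
  then show "\<forall>p. kforces \<Theta> M (MConj (MImpl (Box p) p) (MImpl p (Box p)))"
    by (simp add: box_iff_at_sole_successor)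
next
  assume H: "\<forall>p. kforces \<Theta> M (MConj (MImpl (Box p) p) (MImpl p (Box p)))"
  have T: "kforces \<Theta> M (MImpl (Box p) p)" for p
    using H[rule_format, of p] by (simp only: kforces.simps(4))
  have boxed: "kforces \<Theta> M (MImpl p (Box p))" for p
    using H[rule_format, of p] by (simp only: kforces.simps(4))
  have "RTheta \<Theta> M M"
    using T by (rule reflexive_if_T)
  moreover have "M' = M" if "RTheta \<Theta> M M'" for M'
    using boxed boxed that by (rule successor_eq_if_literals_boxed)
  ultimately show "causally_explained \<Theta> M"
    by (auto simp: causally_explained_iff_sole_successor)
qed

end
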